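(* Let $n\ge2$, $v\in\tilde{S}_n$ and $r\in\mathbb{Z}$. Let $R(\Psi^+_r(v))$ denote the set of all reduced words of all elements of $\Psi^+_r(v)$ and $R(\Psi^-_r(v))$ the set of all reduced words of all elements of $\Psi^-_r(v)$, each reduced word $a$ of an element $w\gtrdot v$ being regarded as the reduced $v$-marked word $(a,i)$ with $i$ the unique index such that deleting $a_i$ gives a reduced word of $v$. Then the map $\phi^v$ restricts to a bijection $\phi^v_r: R(\Psi^+_r(v))\to R(\Psi^-_r(v))$.
   Context: $\tilde{S}_n$ is the affine symmetric group: bijections $w:\mathbb{Z}\to\mathbb{Z}$ with $w(i+n)=w(i)+n$ and $\sum_{i=1}^n w(i)=\sum_{i=1}^n i$, a Coxeter group with simple reflections $s_0,\dots,s_{n-1}$ ($s_i$ swaps $i+kn$ and $i+1+kn$ for all $k$). For $r\not\equiv s\pmod n$, $t_{r,s}$ is the unique element swapping $r$ and $s$ and fixing every integer not congruent to $r$ or $s$ mod $n$. $\ell$ is Coxeter length, $R(w)$ the set of reduced words of $w$ (words in letters $\{0,\dots,n-1\}$). $v\lessdot w$ means $w=vt_{p,q}$ for some reflection $t_{p,q}$ and $\ell(w)=\ell(v)+1$. $\Psi^+_r(v)$ is the set of $w$ with $v\lessdot w$ and $w=vt_{r,s}$ for some $s>r$; $\Psi^-_r(v)$ is the set of $w$ with $v\lessdot w$ and $w=vt_{s,r}$ for some $s<r$. (For $w\gtrdot v$ and $a\in R(w)$ there is a unique index $i$ such that deleting $a_i$ gives a word in $R(v)$.) A $v$-marked word is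 a pair $(a,i)$ with $a=a_1\cdots a_l$ a word in letters $\{0,\dots,n-1\}$ and $i\in[1,l]$ such that $a_1\cdots\widehat{a_i}\cdots a_l\in R(v)$; it is reduced if $a$ is a reduced word. The affine Little graph has the $v$-marked words as vertices and, from each $(a,i)$, a unique edge $(a,i)\to(a',j)$, where $a'$ is obtained from $a$ by replacing $a_i$ by $a_i-1$ (mod $n$), and $j=i$ if $a'$ is reduced, while otherwise $j$ is the unique index $j\ne i$ with $a'_1\cdots\widehat{a'_j}\cdots a'_l\in R(v)$ (which exists and is unique). Every vertex has exactly one incoming edge, so the components are finite directed cycles. For a reduced $v$-marked word $(a,i)$, $\phi^v(a,i)$ is the first reduced $v$-marked word strictly after $(a,i)$ along its cycle. *)

theory Defs
  imports Main
begin

text \<open>Elements of the affine symmetric group are functions int => int; the group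
product is composition: (v w)(i) = v (w i), so v t_{p,q} = v o t_{p,q}.\<close>

definition affine_perm :: "nat \<Rightarrow> (int \<Rightarrow> int) \<Rightarrow> bool" where
  "affine_perm n w \<longleftrightarrow> bij w \<and> (\<forall>i. w (i + int n) = w i + int n)
     \<and> (\<Sum>i\<in>{1..int n}. w i) = (\<Sum>i\<in>{1..int n}. i)"

definition sref :: "nat \<Rightarrow> nat \<Rightarrow> int \<Rightarrow> int" where
  "sref n i j = (if j mod int n = int i mod int n then j + 1
                 else if j mod int n = (int i + 1) mod int n then j - 1 else j)"

definition word_perm :: "nat \<Rightarrow> nat list \<Rightarrow> int \<Rightarrow> int" where
  "word_perm n a = foldr (\<lambda>i f. sref n i \<circ> f) a id"

definition is_word :: "nat \<Rightarrow> nat list \<Rightarrow> bool" where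
  "is_word n a \<longleftrightarrow> (\<forall>x\<in>set a. x < n)"

definition clen :: "nat \<Rightarrow> (int \<Rightarrow> int) \<Rightarrow> nat" where
  "clen n w = (LEAST k. \<exists>a. is_word n a \<and> length a = k \<and> word_perm n a = w)"

definition red_words :: "nat \<Rightarrow> (int \<Rightarrow> int) \<Rightarrow> nat list set" where
  "red_words n w = {a. is_word n a \<and> word_perm n a = w \<and> length a = clen n w}"

definition is_reduced :: "nat \<Rightarrow> nat list \<Rightarrow> bool" where
  "is_reduced n a \<longleftrightarrow> a \<in> red_words n (word_perm n a)"

definition tref :: "nat \<Rightarrow> int \<Rightarrow> int \<Rightarrow> int \<Rightarrow> int" where
  "tref n r s j = (if j mod int n = r mod int n then j + (s - r)
                   else if j mod int n = s mod int n then j + (r - s) else j)"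

definition covers :: "nat \<Rightarrow> (int \<Rightarrow> int) \<Rightarrow> (int \<Rightarrow> int) \<Rightarrow> bool" where
  "covers n v w \<longleftrightarrow> (\<exists>p q. p mod int n \<noteq> q mod int n \<and> w = v \<circ> tref n p q)
      \<and> clen n w = clen n v + 1"

definition Psi_plus :: "nat \<Rightarrow> int \<Rightarrow> (int \<Rightarrow> int) \<Rightarrow> (int \<Rightarrow> int) set" where
  "Psi_plus n r v = {w. covers n v w \<and>
      (\<exists>s. s > r \<and> s mod int n \<noteq> r mod int n \<and> w = v \<circ> tref n r s)}"

definition Psi_minus :: "nat \<Rightarrow> int \<Rightarrow> (int \<Rightarrow> int) \<Rightarrow> (int \<Rightarrow> int) set" where
  "Psi_minus n r v = {w. covers n v w \<and>
      (\<exists>s. s < r \<and> s mod int n \<noteq> r mod int n \<and> w = v \<circ> tref n s r)}"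

definition del_at :: "nat \<Rightarrow> 'a list \<Rightarrow> 'a list" where
  "del_at i a = take i a @ drop (Suc i) a"

text \<open>v-marked words (a,i), with i a 0-based index (paper's index i+1).\<close>
definition marked :: "nat \<Rightarrow> (int \<Rightarrow> int) \<Rightarrow> nat list \<times> nat \<Rightarrow> bool" where
  "marked n v ai \<longleftrightarrow> (case ai of (a, i) \<Rightarrow>
      is_word n a \<and> i < length a \<and> del_at i a \<in> red_words n v)"

definition little_next :: "nat \<Rightarrow> (int \<Rightarrow> int) \<Rightarrow> nat list \<times> nat \<Rightarrow> nat list \<times> nat" where
  "little_next n v ai = (case ai of (a, i) \<Rightarrow>
      let a' = a[i := (a ! i + n - 1) mod n] in
      if is_reduced n a' then (a', i)
      else (a', THE j. j < length a' \<and> j \<noteq> i \<and> del_at j a' \<in> red_words n v))"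

definition phi :: "nat \<Rightarrow> (int \<Rightarrow> int) \<Rightarrow> nat list \<times> nat \<Rightarrow> nat list \<times> nat" where
  "phi n v ai = (little_next n v ^^
      (LEAST k. k > 0 \<and> is_reduced n (fst ((little_next n v ^^ k) ai)))) ai"

definition marked_red_words :: "nat \<Rightarrow> (int \<Rightarrow> int) \<Rightarrow> (int \<Rightarrow> int) set \<Rightarrow> (nat list \<times> nat) set" where
  "marked_red_words n v S = {(a, i). (\<exists>w\<in>S. a \<in> red_words n w) \<and> i < length a
      \<and> del_at i a \<in> red_words n v}"

end

(*
  Deleting the letter a_i from a word a multiplies its product on the right by
  the reflection t_{p,q} = u^-1 s_{a_i} u, where u is the product of the letters after a_i and
  p = u^-1(a_i), q = u^-1(a_i + 1).  For a reduced v-marked word (a,i) of a cover w = v t_{p,q}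
  one has p < q, and w lies in Psi+_r iff p = r (mod n), in Psi-_r iff q = r (mod n).

  Lowering a_i by one (mod n) leaves u unchanged, so the new q = u^-1((a_i - 1) + 1) has the
  residue of the old p.  If the new word is reduced the bump stops; otherwise the Little bump
  moves to the unique other letter a_j (its twin) carrying the same reflection.  Counting
  inversions of the suffixes shows that a_j sees this reflection with the opposite
  orientation, so the p of a_j has the residue of the new q, i.e. again that of the original
  p.  Hence along a cycle the residue of p is carried through all non-reduced words and
  becomes the residue of q at the next reduced word: phi maps (a,i) into Psi-_r exactly when
  (a,i) lies over Psi+_r.  Since the Little map is an injective self-map of the finite set of
  v-marked words, the first-return map phi permutes the reduced ones, and the bijection
  follows.  Throughout, Coxeter length is identified with the number of inversions.
*)
theory Submission
  imports Defs
begin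

section \<open>First-return maps\<close>

definition first_return :: "('a \<Rightarrow> 'a) \<Rightarrow> ('a \<Rightarrow> bool) \<Rightarrow> 'a \<Rightarrow> 'a" where
  "first_return f P x = (f ^^ (LEAST k. k > 0 \<and> P ((f ^^ k) x))) x"

lemma funpow_bij_betw_apply: "bij_betw f A A \<Longrightarrow> x \<in> A \<Longrightarrow> (f ^^ k) x \<in> A"
  using bij_betw_apply bij_betw_funpow by metis

lemma funpow_returns:
  assumes "finite A" and f: "bij_betw f A A" and x: "x \<in> A"
  obtains k where "k > 0" and "(f ^^ k) x = x"
proof -
  have "finite (range (\<lambda>k. (f ^^ k) x))"
    using funpow_bij_betw_apply[OF f x] by (blast intro: finite_subset[OF _ \<open>finite A\<close>])
  then have "\<not> inj (\<lambda>k. (f ^^ k) x)"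
    using finite_imageD infinite_UNIV_nat by blast
  then obtain p q where "p \<noteq> q" and "(f ^^ p) x = (f ^^ q) x"
    unfolding inj_def by blast
  then obtain p q where "p < q" and "(f ^^ p) x = (f ^^ q) x"
    by (metis linorder_neqE_nat)
  then have "(f ^^ p) ((f ^^ (q - p)) x) = (f ^^ p) x"
    using \<open>p < q\<close> by (metis funpow_add comp_apply less_imp_le le_add_diff_inverse)
  then have "(f ^^ (q - p)) x = x"
    using bij_betw_imp_inj_on[OF bij_betw_funpow[OF f, of p]] funpow_bij_betw_apply[OF f] x
    by (auto simp: inj_on_def)
  with \<open>p < q\<close> show thesis by (intro that[of "q - p"]) simp_all
qed

lemma first_return_least:
  assumes "finite A" and f: "bij_betw f A A" and x: "x \<in> A" "P x"
  defines "K \<equiv> LEAST k. k > 0 \<and> P ((f ^^ k) x)"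
  shows "K > 0" and "P ((f ^^ K) x)" and "\<And>m. 0 < m \<Longrightarrow> m < K \<Longrightarrow> \<not> P ((f ^^ m) x)"
    and "first_return f P x = (f ^^ K) x"
proof -
  obtain k where "k > 0" "(f ^^ k) x = x"
    using funpow_returns[OF assms(1-3)] .
  with x have ex: "\<exists>k. k > 0 \<and> P ((f ^^ k) x)" by auto
  show "K > 0" and "P ((f ^^ K) x)" unfolding K_def using LeastI_ex[OF ex] by auto
  show "\<And>m. 0 < m \<Longrightarrow> m < K \<Longrightarrow> \<not> P ((f ^^ m) x)" unfolding K_def using not_less_Least by blast
  show "first_return f P x = (f ^^ K) x" unfolding first_return_def K_def ..
qed

lemma first_return_in:
  assumes "finite A" and "bij_betw f A A" and "x \<in> A" and "P x"
  shows "first_return f P x \<in> {y \<in> A. P y}"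
  using first_return_least[where P = P, OF assms] funpow_bij_betw_apply[OF assms(2,3)] by auto

lemma funpow_eq_no_return_imp_eq:
  assumes f: "bij_betw f A A" and x: "x \<in> A" "P x" and y: "y \<in> A"
    and "0 < K" and "K \<le> M" and skip: "\<And>m. 0 < m \<Longrightarrow> m < M \<Longrightarrow> \<not> P ((f ^^ m) y)"
    and eq: "(f ^^ K) x = (f ^^ M) y"
  shows "x = y"
proof -
  have "(f ^^ K) x = (f ^^ K) ((f ^^ (M - K)) y)"
    using eq \<open>K \<le> M\<close> by (metis funpow_add comp_apply le_add_diff_inverse)
  then have x_eq: "x = (f ^^ (M - K)) y"
    using bij_betw_imp_inj_on[OF bij_betw_funpow[OF f, of K]] funpow_bij_betw_apply[OF f y] x(1)
    by (auto simp: inj_on_def)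
  have "M - K = 0"
  proof (rule ccontr)
    assume "M - K \<noteq> 0"
    then have "\<not> P ((f ^^ (M - K)) y)" using skip \<open>0 < K\<close> \<open>K \<le> M\<close> by simp
    with x(2) x_eq show False by simp
  qed
  with x_eq show ?thesis by simp
qed

lemma inj_on_first_return:
  assumes "finite A" and f: "bij_betw f A A"
  shows "inj_on (first_return f P) {x \<in> A. P x}"
proof (rule inj_onI)
  fix x y assume "x \<in> {x \<in> A. P x}" "y \<in> {x \<in> A. P x}"
    and eq: "first_return f P x = first_return f P y"
  then have x: "x \<in> A" "P x" and y: "y \<in> A" "P y" by auto
  define K where "K = (LEAST k. k > 0 \<and> P ((f ^^ k) x))"
  define M where "M = (LEAST k. k > 0 \<and> P ((f ^^ k) y))"
  note Kx = first_return_least[where P = P, OF assms x, folded K_def]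
  note My = first_return_least[where P = P, OF assms y, folded M_def]
  have "(f ^^ K) x = (f ^^ M) y" using eq Kx(4) My(4) by simp
  then show "x = y"
    using funpow_eq_no_return_imp_eq[OF f x y(1) Kx(1) _ My(3)]
      funpow_eq_no_return_imp_eq[OF f y x(1) My(1) _ Kx(3)]
    by (metis nat_le_linear)
qed

lemma bij_betw_first_return:
  assumes "finite A" and "bij_betw f A A"
  shows "bij_betw (first_return f P) {x \<in> A. P x} {x \<in> A. P x}"
proof -
  have "first_return f P ` {x \<in> A. P x} = {x \<in> A. P x}"
    using assms first_return_in[where P = P, OF assms]
    by (intro endo_inj_surj inj_on_first_return) (auto intro: finite_subset)
  then show ?thesis using inj_on_first_return[OF assms] by (simp add: bij_betw_def)
qed

lemma first_return_transport:
  assumes "finite A" and f: "bij_betw f A A" and x: "x \<in> A" "P x"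
    and carry: "\<And>y. y \<in> A \<Longrightarrow> \<not> P (f y) \<Longrightarrow> g (f y) = g y"
    and arrive: "\<And>y. y \<in> A \<Longrightarrow> P (f y) \<Longrightarrow> h (f y) = g y"
  shows "h (first_return f P x) = g x"
proof -
  define K where "K = (LEAST k. k > 0 \<and> P ((f ^^ k) x))"
  note K = first_return_least[where P = P, OF assms(1-4), folded K_def]
  have "g ((f ^^ m) x) = g x" if "m < K" for m
    using that
  proof (induction m)
    case (Suc m)
    then show ?case
      using carry[OF funpow_bij_betw_apply[OF f x(1)]] K(3)[of "Suc m"] by simp
  qed simp
  moreover obtain K' where "K = Suc K'" using K(1) not0_implies_Suc by blast
  ultimately show ?thesis
    using arrive[OF funpow_bij_betw_apply[OF f x(1)], of K'] K(2,4) by simp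
qed

lemma bij_betw_restrict_preimage:
  assumes "bij_betw f A A" and "S \<subseteq> A" and "T \<subseteq> A" and "\<And>x. x \<in> A \<Longrightarrow> f x \<in> T \<longleftrightarrow> x \<in> S"
  shows "bij_betw f S T"
proof (rule bij_betw_subset[OF assms(1,2)])
  show "f ` S = T"
  proof
    show "f ` S \<subseteq> T" using assms(2,4) by blast
    show "T \<subseteq> f ` S"
    proof
      fix t assume "t \<in> T"
      then obtain x where "x \<in> A" "t = f x"
        using assms(1,3) bij_betw_imp_surj_on by blast
      with \<open>t \<in> T\<close> assms(4) show "t \<in> f ` S" by blast
    qed
  qed
qed

section \<open>Increasing surjections of the integers\<close>

lemma int_less_by_succ:
  fixes u :: "int \<Rightarrow> int"
  assumes succ: "\<And>j. u j < u (j + 1)" and "a < b"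
  shows "u a < u b"
proof -
  have "a + 1 \<le> b" using \<open>a < b\<close> by simp
  then show ?thesis
  proof (induction b rule: int_ge_induct)
    case (step i) then show ?case using succ[of i] by simp
  qed (use succ in simp)
qed

lemma int_translation_by_succ:
  fixes f :: "int \<Rightarrow> int"
  assumes succ: "\<And>j. f (j + 1) = f j + 1"
  shows "f j = j + f 0"
proof (induction j rule: int_induct[where k = 0])
  case (step1 i) then show ?case using succ[of i] by simp
next
  case (step2 i) then show ?case using succ[of "i - 1"] by simp
qed simp

lemma surj_int_succ_less_imp_translation:
  fixes u :: "int \<Rightarrow> int"
  assumes "surj u" and inc: "\<And>j. u j < u (j + 1)"
  shows "u j = j + u 0"
proof (rule int_translation_by_succ)
  fix j
  have mono: "u a \<le> u b" if "a \<le> b" for a b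
    using that int_less_by_succ[of u, OF inc] by (cases "a = b") (auto intro: less_imp_le)
  show "u (j + 1) = u j + 1"
  proof (rule ccontr)
    assume "u (j + 1) \<noteq> u j + 1"
    then have gap: "u j + 1 < u (j + 1)" using inc[of j] by simp
    obtain z where z: "u z = u j + 1" using \<open>surj u\<close> by (metis surjD)
    consider "z \<le> j" | "j + 1 \<le> z" by linarith
    then show False
    proof cases
      case 1 then show False using mono[OF 1] z by simp
    next
      case 2 then show False using mono[OF 2] z gap by simp
    qed
  qed
qed

section \<open>Periodic bijections and affine reflections\<close>

locale affine_symmetric =
  fixes n :: nat
  assumes two_le_n: "2 \<le> n"
begin

lemma n_pos: "int n > 0"
  using two_le_n by simp

lemma mod_eq_imp_shift:
  assumes "a mod int n = b mod int n"
  obtains m where "b = a + m * int n"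
proof -
  have "int n dvd b - a" using assms[symmetric] by (simp add: mod_eq_dvd_iff)
  then show thesis using that by (metis add.commute diff_add_cancel dvd_div_mult_self)
qed

definition periodic :: "(int \<Rightarrow> int) \<Rightarrow> bool" where
  "periodic w \<longleftrightarrow> bij w \<and> (\<forall>i. w (i + int n) = w i + int n)"

lemma periodic_shift:
  assumes "periodic w"
  shows "w (i + m * int n) = w i + m * int n"
proof (induction m rule: int_induct[where k = 0])
  case (step1 m)
  have "w (i + (m + 1) * int n) = w ((i + m * int n) + int n)" by (simp add: algebra_simps)
  also have "\<dots> = w (i + m * int n) + int n" using assms unfolding periodic_def by blast
  finally show ?case using step1 by (simp add: algebra_simps)
next
  case (step2 m)
  have "w (i + (m - 1) * int n + int n) = w (i + (m - 1) * int n) + int n"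
    using assms by (simp add: periodic_def)
  with step2 show ?case by (simp add: algebra_simps)
qed simp

lemma periodic_apply_inv [simp]: "periodic w \<Longrightarrow> w (inv w x) = x"
  unfolding periodic_def by (simp add: bij_is_surj surj_f_inv_f)

lemma periodic_inv_apply [simp]: "periodic w \<Longrightarrow> inv w (w x) = x"
  unfolding periodic_def by (simp add: bij_is_inj)

lemma periodic_eq_iff: "periodic w \<Longrightarrow> w x = w y \<longleftrightarrow> x = y"
  unfolding periodic_def bij_def inj_def by metis

lemma periodic_cancel_left: "periodic w \<Longrightarrow> w \<circ> f = w \<circ> g \<Longrightarrow> f = g"
  by (rule ext) (metis comp_apply periodic_eq_iff)

lemma periodic_mod_eq_iff:
  assumes w: "periodic w"
  shows "w i mod int n = w j mod int n \<longleftrightarrow> i mod int n = j mod int n"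
proof
  assume "w i mod int n = w j mod int n"
  then obtain m where "w j = w i + m * int n" by (rule mod_eq_imp_shift)
  then have "w j = w (i + m * int n)" using periodic_shift[OF w] by simp
  then show "i mod int n = j mod int n" using periodic_eq_iff[OF w] by force
next
  assume "i mod int n = j mod int n"
  then obtain m where "j = i + m * int n" by (rule mod_eq_imp_shift)
  then show "w i mod int n = w j mod int n" using periodic_shift[OF w] by simp
qed

lemma periodic_inv: assumes "periodic w" shows "periodic (inv w)"
proof -
  have "inv w (i + int n) = inv w i + int n" for i
    using assms periodic_apply_inv[OF assms, of i] periodic_inv_apply[OF assms]
    by (metis periodic_def)
  then show ?thesis using assms bij_imp_bij_inv unfolding periodic_def by auto
qed

lemma periodic_comp: "periodic f \<Longrightarrow> periodic g \<Longrightarrow> periodic (f \<circ> g)"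
  unfolding periodic_def by (auto intro: bij_comp)

lemma periodic_id: "periodic id"
  unfolding periodic_def by simp

definition incong :: "int \<Rightarrow> int \<Rightarrow> bool" where
  "incong p q \<longleftrightarrow> p mod int n \<noteq> q mod int n"

lemma incong_imp_neq: "incong p q \<Longrightarrow> p \<noteq> q"
  unfolding incong_def by auto

lemma incong_shift: "incong (p + m * int n) (q + m * int n) \<longleftrightarrow> incong p q"
  unfolding incong_def by simp

lemma incong_succ: "incong k (k + 1)"
proof -
  have "\<not> int n dvd 1" using two_le_n by simp
  then show ?thesis unfolding incong_def by (metis add_diff_cancel_left' mod_eq_dvd_iff)
qed

lemma periodic_incong_iff: "periodic w \<Longrightarrow> incong (w p) (w q) \<longleftrightarrow> incong p q"
  unfolding incong_def using periodic_mod_eq_iff by simp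

lemma tref_left: "incong p q \<Longrightarrow> tref n p q (p + m * int n) = q + m * int n"
  unfolding tref_def incong_def by simp

lemma tref_right: "incong p q \<Longrightarrow> tref n p q (q + m * int n) = p + m * int n"
  unfolding tref_def incong_def by simp

lemma tref_fixes:
  "j mod int n \<noteq> p mod int n \<Longrightarrow> j mod int n \<noteq> q mod int n \<Longrightarrow> tref n p q j = j"
  unfolding tref_def by simp

lemma tref_commute: "incong p q \<Longrightarrow> tref n p q = tref n q p"
  unfolding tref_def incong_def by (rule ext) auto

lemma tref_shift: "tref n (p + m * int n) (q + m * int n) = tref n p q"
  unfolding tref_def by (rule ext) simp

lemma tref_tref [simp]:
  assumes "incong p q"
  shows "tref n p q (tref n p q j) = j"
proof -
  have "(j + (q - p)) mod int n = q mod int n" if "j mod int n = p mod int n" for j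
    using that by (metis add_diff_cancel_left' diff_add_cancel mod_add_left_eq)
  moreover have "(j + (p - q)) mod int n = p mod int n" if "j mod int n = q mod int n" for j
    using that by (metis add_diff_cancel_left' diff_add_cancel mod_add_left_eq)
  ultimately show ?thesis using assms unfolding tref_def incong_def by auto
qed

lemma tref_comp_tref: "incong p q \<Longrightarrow> tref n p q \<circ> tref n p q = id"
  by (rule ext) simp

lemma comp_tref_tref: "incong p q \<Longrightarrow> w \<circ> tref n p q \<circ> tref n p q = w"
  by (rule ext) simp

lemma periodic_tref: assumes "incong p q" shows "periodic (tref n p q)"
proof -
  have "bij (tref n p q)"
    by (rule o_bij[where g = "tref n p q"]) (simp_all add: tref_comp_tref assms)
  then show ?thesis unfolding periodic_def tref_def by simp
qed

lemma inv_tref: "incong p q \<Longrightarrow> inv (tref n p q) = tref n p q"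
  by (metis inv_unique_comp tref_comp_tref)

lemma sref_eq_tref: "sref n k = tref n (int k) (int k + 1)"
  unfolding sref_def tref_def by (rule ext) auto

lemma tref_eq_tref_imp:
  assumes pq: "incong p q" and cd: "incong c d" and eq: "tref n p q = tref n c d"
  obtains m where "c = p + m * int n" "d = q + m * int n"
    | m where "c = q + m * int n" "d = p + m * int n"
proof -
  have d: "tref n p q c = d" using eq tref_left[OF cd, of 0] by simp
  consider "c mod int n = p mod int n" | "c mod int n = q mod int n"
    | "c mod int n \<noteq> p mod int n" "c mod int n \<noteq> q mod int n" by blast
  then show thesis
  proof cases
    case 1
    then obtain m where c: "c = p + m * int n" by (metis mod_eq_imp_shift)
    then have "d = q + m * int n" using d tref_left[OF pq] by simp
    with c show thesis by (rule that(1))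
  next
    case 2
    then obtain m where c: "c = q + m * int n" by (metis mod_eq_imp_shift)
    then have "d = p + m * int n" using d tref_right[OF pq] by simp
    with c show thesis by (rule that(2))
  next
    case 3
    then have "d = c" using d tref_fixes by simp
    with cd show thesis by (simp add: incong_def)
  qed
qed

lemma tref_conj:
  assumes w: "periodic w" and pq: "incong p q"
  shows "w \<circ> tref n p q \<circ> inv w = tref n (w p) (w q)"
proof
  fix y
  define j where "j = inv w y"
  have y: "y = w j" by (simp add: j_def w)
  have lhs: "(w \<circ> tref n p q \<circ> inv w) y = w (tref n p q j)" by (simp add: j_def)
  have wpq: "incong (w p) (w q)" using periodic_incong_iff w pq by auto
  consider m where "j = p + m * int n" | m where "j = q + m * int n"
    | "j mod int n \<noteq> p mod int n" "j mod int n \<noteq> q mod int n"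
    by (metis mod_eq_imp_shift)
  then show "(w \<circ> tref n p q \<circ> inv w) y = tref n (w p) (w q) y"
  proof cases
    case 1
    then have "w (tref n p q j) = w q + m * int n" "w j = w p + m * int n"
      using tref_left[OF pq] periodic_shift[OF w] by simp_all
    moreover have "tref n (w p) (w q) y = w q + m * int n"
      using calculation(2) y tref_left[OF wpq] by simp
    ultimately show ?thesis using lhs by simp
  next
    case 2
    then have "w (tref n p q j) = w p + m * int n" "w j = w q + m * int n"
      using tref_right[OF pq] periodic_shift[OF w] by simp_all
    moreover have "tref n (w p) (w q) y = w p + m * int n"
      using calculation(2) y tref_right[OF wpq] by simp
    ultimately show ?thesis using lhs by simp
  next
    case 3
    then have "w j mod int n \<noteq> w p mod int n" "w j mod int n \<noteq> w q mod int n"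
      using periodic_mod_eq_iff[OF w] by auto
    with 3 show ?thesis using lhs y tref_fixes by metis
  qed
qed

section \<open>Inversions and Coxeter length\<close>

definition inversions :: "(int \<Rightarrow> int) \<Rightarrow> (int \<Rightarrow> int) set" where
  "inversions w = {tref n c d | c d. c < d \<and> w d < w c}"

definition ninv :: "(int \<Rightarrow> int) \<Rightarrow> nat" where
  "ninv w = card (inversions w)"

lemma incong_of_inversion:
  assumes w: "periodic w" and "c < d" and "w d < w c"
  shows "incong c d"
proof (rule ccontr)
  assume "\<not> incong c d"
  then obtain m where d: "d = c + m * int n" unfolding incong_def by (metis mod_eq_imp_shift)
  with \<open>c < d\<close> n_pos have "m > 0" by (simp add: zero_less_mult_iff)
  with d have "w d > w c" using periodic_shift[OF w] n_pos by simp
  with \<open>w d < w c\<close> show False by simp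
qed

lemma inversions_are_trefs: "periodic w \<Longrightarrow> t \<in> inversions w \<Longrightarrow> \<exists>p q. incong p q \<and> t = tref n p q"
  unfolding inversions_def using incong_of_inversion by blast

lemma tref_in_inversions_iff:
  assumes w: "periodic w" and pq: "incong p q"
  shows "tref n p q \<in> inversions w \<longleftrightarrow> (p < q \<longleftrightarrow> w q < w p)"
proof
  assume "tref n p q \<in> inversions w"
  then obtain c d where cd: "c < d" "w d < w c" "tref n p q = tref n c d"
    unfolding inversions_def by blast
  from pq incong_of_inversion[OF w cd(1,2)] cd(3) show "p < q \<longleftrightarrow> w q < w p"
  proof (cases rule: tref_eq_tref_imp)
    case (1 m)
    then show ?thesis using cd periodic_shift[OF w] by auto
  next
    case (2 m)
    then show ?thesis using cd periodic_shift[OF w] by auto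
  qed
next
  assume h: "p < q \<longleftrightarrow> w q < w p"
  have "p \<noteq> q" "w p \<noteq> w q" using pq incong_imp_neq periodic_eq_iff[OF w] by auto
  show "tref n p q \<in> inversions w"
  proof (cases "p < q")
    case True
    with h show ?thesis unfolding inversions_def by blast
  next
    case False
    with h \<open>p \<noteq> q\<close> \<open>w p \<noteq> w q\<close> have "q < p" "w p < w q" by auto
    with tref_commute[OF pq] show ?thesis unfolding inversions_def by blast
  qed
qed

lemma periodic_displacement_bounded:
  assumes w: "periodic w"
  obtains C where "\<And>j. \<bar>w j - j\<bar> \<le> C"
proof -
  define C where "C = Max ((\<lambda>j. \<bar>w j - j\<bar>) ` {1..int n})"
  have "\<bar>w j - j\<bar> \<le> C" for j
  proof -
    define j0 where "j0 = (j - 1) mod int n + 1"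
    have j: "j = j0 + ((j - 1) div int n) * int n" unfolding j0_def by simp
    have "j0 \<in> {1..int n}"
      unfolding j0_def using pos_mod_bound[OF n_pos, of "j - 1"] pos_mod_sign[OF n_pos, of "j - 1"]
      by simp
    then have "\<bar>w j0 - j0\<bar> \<le> C" unfolding C_def by (intro Max_ge) auto
    moreover have "w j - j = w j0 - j0" using periodic_shift[OF w] by (subst (1 2) j) simp
    ultimately show ?thesis by simp
  qed
  then show thesis by (rule that)
qed

text \<open>Translating an inversion pair by a multiple of \<open>n\<close> does not change the reflection,
  so every inversion is represented by a pair with \<open>c \<in> [1, n]\<close>, and then \<open>d\<close> is bounded
  because \<open>w\<close> moves points a bounded distance.\<close>
lemma finite_inversions:
  assumes w: "periodic w"
  shows "finite (inversions w)"
proof -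
  obtain C where C: "\<And>j. \<bar>w j - j\<bar> \<le> C" using periodic_displacement_bounded[OF w] by blast
  have "inversions w \<subseteq> (\<lambda>(c, d). tref n c d) ` ({1..int n} \<times> {1..int n + 2 * C})"
  proof
    fix t assume "t \<in> inversions w"
    then obtain c d where cd: "c < d" "w d < w c" "t = tref n c d" unfolding inversions_def by blast
    define m where "m = (c - 1) div int n"
    define c' where "c' = c - m * int n"
    define d' where "d' = d - m * int n"
    have "c' = (c - 1) mod int n + 1"
      unfolding c'_def m_def by (simp add: minus_div_mult_eq_mod[symmetric])
    then have c': "c' \<in> {1..int n}"
      using pos_mod_bound[OF n_pos, of "c - 1"] pos_mod_sign[OF n_pos, of "c - 1"] by simp
    have "w c = w c' + m * int n" "w d = w d' + m * int n"
      using periodic_shift[OF w, of c' m] periodic_shift[OF w, of d' m] unfolding c'_def d'_def by auto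
    then have "w d' < w c'" using cd by simp
    moreover have "c' < d'" using cd unfolding c'_def d'_def by simp
    ultimately have "(c', d') \<in> {1..int n} \<times> {1..int n + 2 * C}"
      using C[of c'] C[of d'] c' by auto
    moreover have "t = tref n c' d'"
      using cd(3) tref_shift[of c' m d'] unfolding c'_def d'_def by simp
    ultimately show "t \<in> (\<lambda>(c, d). tref n c d) ` ({1..int n} \<times> {1..int n + 2 * C})" by force
  qed
  then show ?thesis by (rule finite_subset) auto
qed

lemma tref_succ_less_iff:
  assumes "u < v"
  shows "tref n x (x + 1) u < tref n x (x + 1) v \<longleftrightarrow> \<not> (u mod int n = x mod int n \<and> v = u + 1)"
proof -
  let ?s = "tref n x (x + 1)"
  have x: "x mod int n \<noteq> (x + 1) mod int n" using incong_succ unfolding incong_def .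
  have s: "?s j = (if j mod int n = x mod int n then j + 1
      else if j mod int n = (x + 1) mod int n then j - 1 else j)" for j
    unfolding tref_def by simp
  show ?thesis
  proof (cases "u mod int n = x mod int n \<and> v = u + 1")
    case True
    then have "v mod int n = (x + 1) mod int n" by (metis mod_add_left_eq)
    with True x s[of u] s[of v] show ?thesis by simp
  next
    case False
    have "?s u \<noteq> ?s v"
      using periodic_eq_iff[OF periodic_tref[OF incong_succ]] \<open>u < v\<close> by auto
    moreover have "?s u \<le> ?s v"
    proof (cases "v = u + 1")
      case True
      with False have "?s u \<le> u" using s[of u] by simp
      moreover have "?s v \<ge> v - 1" using s[of v] by simp
      ultimately show ?thesis using True by simp
    next
      case False
      then show ?thesis using \<open>u < v\<close> s[of u] s[of v] by (auto split: if_splits)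
    qed
    ultimately show ?thesis using False by simp
  qed
qed

lemma tref_succ_inverts_iff:
  assumes "u \<noteq> v"
  shows "tref n x (x + 1) v < tref n x (x + 1) u \<longleftrightarrow>
    (v < u \<longleftrightarrow> \<not> ((u mod int n = x mod int n \<and> v = u + 1) \<or> (v mod int n = x mod int n \<and> u = v + 1)))"
proof -
  have "tref n x (x + 1) u \<noteq> tref n x (x + 1) v"
    using periodic_eq_iff[OF periodic_tref[OF incong_succ]] assms by auto
  with assms show ?thesis
    using tref_succ_less_iff[of u v x] tref_succ_less_iff[of v u x] by (cases "u < v") auto
qed

definition conj_sref :: "(int \<Rightarrow> int) \<Rightarrow> int \<Rightarrow> int \<Rightarrow> int" where
  "conj_sref w x = tref n (inv w x) (inv w (x + 1))"

lemma incong_conj_sref: "periodic w \<Longrightarrow> incong (inv w x) (inv w (x + 1))"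
  using periodic_incong_iff[OF periodic_inv, of w x "x + 1"] incong_succ by simp

lemma conj_sref_eq: "periodic w \<Longrightarrow> inv w \<circ> tref n x (x + 1) \<circ> w = conj_sref w x"
  using tref_conj[OF periodic_inv incong_succ, of w x] unfolding conj_sref_def
  by (metis periodic_def inv_inv_eq)

lemma tref_eq_conj_sref_iff:
  assumes w: "periodic w" and pq: "incong p q"
  shows "tref n p q = conj_sref w x \<longleftrightarrow>
    (w p mod int n = x mod int n \<and> w q = w p + 1) \<or> (w q mod int n = x mod int n \<and> w p = w q + 1)"
    (is "_ \<longleftrightarrow> ?adj p q \<or> ?adj q p")
proof
  assume "tref n p q = conj_sref w x"
  from pq incong_conj_sref[OF w] this[unfolded conj_sref_def]
  show "?adj p q \<or> ?adj q p"
  proof (cases rule: tref_eq_tref_imp)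
    case (1 m)
    then have "x = w p + m * int n" "x + 1 = w q + m * int n"
      using periodic_apply_inv[OF w] periodic_shift[OF w] by metis+
    then show ?thesis by simp
  next
    case (2 m)
    then have "x = w q + m * int n" "x + 1 = w p + m * int n"
      using periodic_apply_inv[OF w] periodic_shift[OF w] by metis+
    then show ?thesis by simp
  qed
next
  have adj: "tref n a b = conj_sref w x" if "?adj a b" for a b
  proof -
    from that obtain m where wa: "w a = x + m * int n" by (metis mod_eq_imp_shift)
    then have "a = inv w x + m * int n" "b = inv w (x + 1) + m * int n"
      using that periodic_inv_apply[OF w] periodic_shift[OF periodic_inv[OF w]]
      by (metis, metis add.commute add.left_commute)
    then show ?thesis unfolding conj_sref_def using tref_shift by simp
  qed
  assume "?adj p q \<or> ?adj q p"
  then show "tref n p q = conj_sref w x"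
    using adj tref_commute[OF pq] by metis
qed

lemma inversions_tref_succ_comp:
  assumes w: "periodic w"
  shows "inversions (tref n x (x + 1) \<circ> w) = sym_diff (inversions w) {conj_sref w x}"
proof -
  have sw: "periodic (tref n x (x + 1) \<circ> w)" using periodic_comp[OF periodic_tref[OF incong_succ] w] .
  have tref_in: "tref n p q \<in> inversions (tref n x (x + 1) \<circ> w) \<longleftrightarrow>
      (tref n p q \<in> inversions w \<longleftrightarrow> tref n p q \<noteq> conj_sref w x)" if pq: "incong p q" for p q
  proof -
    have "w p \<noteq> w q" using periodic_eq_iff[OF w] incong_imp_neq[OF pq] by auto
    from tref_succ_inverts_iff[OF this, of x] show ?thesis
      unfolding tref_in_inversions_iff[OF sw pq] tref_in_inversions_iff[OF w pq]
        tref_eq_conj_sref_iff[OF w pq] comp_apply by blast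
  qed
  show ?thesis
  proof (rule set_eqI)
    fix t
    consider p q where "incong p q" "t = tref n p q"
      | "t \<notin> inversions (tref n x (x + 1) \<circ> w)" "t \<notin> inversions w" "t \<noteq> conj_sref w x"
      using inversions_are_trefs[OF sw] inversions_are_trefs[OF w] incong_conj_sref[OF w]
      unfolding conj_sref_def by blast
    then show "t \<in> inversions (tref n x (x + 1) \<circ> w) \<longleftrightarrow> t \<in> sym_diff (inversions w) {conj_sref w x}"
      by cases (use tref_in in auto)
  qed
qed

lemma conj_sref_in_inversions_iff:
  assumes w: "periodic w"
  shows "conj_sref w x \<in> inversions w \<longleftrightarrow> inv w (x + 1) < inv w x"
proof -
  have "inv w x \<noteq> inv w (x + 1)" using incong_imp_neq[OF incong_conj_sref[OF w]] .
  moreover have "conj_sref w x \<in> inversions w \<longleftrightarrow> (inv w x < inv w (x + 1) \<longleftrightarrow> x + 1 < x)"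
    using tref_in_inversions_iff[OF w incong_conj_sref[OF w]] unfolding conj_sref_def
    by (simp add: w)
  ultimately show ?thesis by linarith
qed

lemma ninv_tref_succ_comp:
  assumes w: "periodic w"
  shows "ninv (tref n x (x + 1) \<circ> w) = (if inv w (x + 1) < inv w x then ninv w - 1 else ninv w + 1)"
proof (cases "inv w (x + 1) < inv w x")
  case True
  then have "inversions (tref n x (x + 1) \<circ> w) = inversions w - {conj_sref w x}"
    using inversions_tref_succ_comp[OF w, of x] conj_sref_in_inversions_iff[OF w, of x] by auto
  with True show ?thesis
    using conj_sref_in_inversions_iff[OF w, of x] finite_inversions[OF w]
    by (simp add: ninv_def card_Diff_singleton)
next
  case False
  then have "inversions (tref n x (x + 1) \<circ> w) = insert (conj_sref w x) (inversions w)"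
    using inversions_tref_succ_comp[OF w, of x] conj_sref_in_inversions_iff[OF w, of x] by auto
  with False show ?thesis
    using conj_sref_in_inversions_iff[OF w, of x] finite_inversions[OF w] by (simp add: ninv_def)
qed

abbreviation W :: "nat list \<Rightarrow> int \<Rightarrow> int" where
  "W \<equiv> word_perm n"

lemma W_Nil [simp]: "W [] = id"
  unfolding word_perm_def by simp

lemma W_Cons: "W (x # a) = sref n x \<circ> W a"
  unfolding word_perm_def by simp

lemma W_append: "W (a @ b) = W a \<circ> W b"
  by (induction a) (simp_all add: W_Cons o_assoc)

lemma sref_sref [simp]: "sref n x (sref n x j) = j"
  unfolding sref_eq_tref using incong_succ by simp

lemma periodic_sref: "periodic (sref n x)"
  unfolding sref_eq_tref by (rule periodic_tref[OF incong_succ])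

lemma periodic_W: "periodic (W a)"
proof (induction a)
  case Nil then show ?case unfolding W_Nil by (rule periodic_id)
next
  case (Cons x a) then show ?case unfolding W_Cons by (rule periodic_comp[OF periodic_sref])
qed

lemma ninv_sref_comp:
  "periodic w \<Longrightarrow>
    ninv (sref n x \<circ> w) = (if inv w (int x + 1) < inv w (int x) then ninv w - 1 else ninv w + 1)"
  unfolding sref_eq_tref by (rule ninv_tref_succ_comp)

lemma ninv_id: "ninv id = 0"
proof -
  have "inversions id = {}" unfolding inversions_def by auto
  then show ?thesis unfolding ninv_def by simp
qed

lemma ninv_W_le: "ninv (W a) \<le> length a \<and> even (length a - ninv (W a))"
proof (induction a)
  case (Cons x a)
  have "ninv (W a) \<ge> 1" if "inv (W a) (int x + 1) < inv (W a) (int x)"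
  proof -
    have "conj_sref (W a) (int x) \<in> inversions (W a)"
      using conj_sref_in_inversions_iff[OF periodic_W] that by simp
    then have "card (inversions (W a)) > 0"
      using finite_inversions[OF periodic_W] card_gt_0_iff by blast
    then show ?thesis unfolding ninv_def by simp
  qed
  with Cons show ?case
    unfolding W_Cons ninv_sref_comp[OF periodic_W] by (auto simp: Suc_diff_le)
qed (simp only: W_Nil ninv_id, simp)

lemma affine_perm_periodic: "affine_perm n w \<Longrightarrow> periodic w"
  unfolding affine_perm_def periodic_def by auto

lemma bij_betw_residues:
  assumes w: "periodic w"
  shows "bij_betw (\<lambda>i. w i mod int n) {1..int n} {0..<int n}"
proof -
  have "inj_on (\<lambda>i. w i mod int n) {1..int n}"
  proof (rule inj_onI)
    fix i j assume "i \<in> {1..int n}" "j \<in> {1..int n}" "w i mod int n = w j mod int n"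
    then have "(i - 1) mod int n = (j - 1) mod int n"
      using periodic_mod_eq_iff[OF w] mod_diff_cong by blast
    moreover have "(i - 1) mod int n = i - 1" "(j - 1) mod int n = j - 1"
      using \<open>i \<in> {1..int n}\<close> \<open>j \<in> {1..int n}\<close> by simp_all
    ultimately show "i = j" by simp
  qed
  moreover have "(\<lambda>i. w i mod int n) ` {1..int n} \<subseteq> {0..<int n}"
    using n_pos by auto
  ultimately show ?thesis
    unfolding bij_betw_def by (simp add: card_image card_subset_eq)
qed

text \<open>Left multiplication by \<open>s\<^sub>x\<close> adds \<open>+1\<close> and \<open>-1\<close> to one residue class each, and \<open>w\<close>
  hits every residue class exactly once in the window \<open>[1, n]\<close>.\<close>
lemma affine_perm_sref_comp:
  assumes a: "affine_perm n w"
  shows "affine_perm n (sref n x \<circ> w)"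
proof -
  have w: "periodic w" using affine_perm_periodic[OF a] .
  define \<delta> :: "int \<Rightarrow> int" where
    "\<delta> r = (if r = int x mod int n then 1 else if r = (int x + 1) mod int n then -1 else 0)" for r
  have x: "int x mod int n \<noteq> (int x + 1) mod int n" using incong_succ unfolding incong_def .
  have "(\<Sum>i\<in>{1..int n}. \<delta> (w i mod int n)) = (\<Sum>r\<in>{0..<int n}. \<delta> r)"
    using sum.reindex_bij_betw[OF bij_betw_residues[OF w], of \<delta>] by simp
  also have "\<dots> = (\<Sum>r\<in>{0..<int n}. (if r = int x mod int n then 1 else 0)
      - (if r = (int x + 1) mod int n then 1 else 0))"
    unfolding \<delta>_def using x by (intro sum.cong) auto
  also have "\<dots> = 0" using n_pos by (simp add: sum_subtractf)
  finally have "(\<Sum>i\<in>{1..int n}. \<delta> (w i mod int n)) = 0" .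
  moreover have "(\<Sum>i\<in>{1..int n}. (sref n x \<circ> w) i) = (\<Sum>i\<in>{1..int n}. w i + \<delta> (w i mod int n))"
    unfolding \<delta>_def sref_def by (intro sum.cong) auto
  ultimately have "(\<Sum>i\<in>{1..int n}. (sref n x \<circ> w) i) = (\<Sum>i\<in>{1..int n}. w i)"
    by (simp add: sum.distrib)
  then show ?thesis
    using a periodic_comp[OF periodic_sref w] unfolding affine_perm_def periodic_def by simp
qed

lemma affine_perm_W: "affine_perm n (W a)"
proof (induction a)
  case Nil then show ?case using bij_id unfolding affine_perm_def by simp
next
  case (Cons x a) then show ?case unfolding W_Cons by (rule affine_perm_sref_comp)
qed

text \<open>Without descents \<open>w\<inverse>\<close> is increasing, hence a translation; the sum condition in
  \<open>affine_perm\<close> forces the translation to be trivial.\<close>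
lemma affine_perm_no_descent_eq_id:
  assumes a: "affine_perm n w" and asc: "\<And>x. x < n \<Longrightarrow> inv w (int x) < inv w (int x + 1)"
  shows "w = id"
proof -
  have w: "periodic w" using affine_perm_periodic[OF a] .
  define u where "u = inv w"
  have u: "periodic u" unfolding u_def using periodic_inv[OF w] .
  have inc: "u j < u (j + 1)" for j
  proof -
    define x where "x = j mod int n"
    define m where "m = j div int n"
    have j: "j = x + m * int n" "j + 1 = (x + 1) + m * int n" unfolding x_def m_def by simp_all
    have "0 \<le> x" "x < int n" unfolding x_def using n_pos by simp_all
    then have "u x < u (x + 1)" using asc[of "nat x"] unfolding u_def by simp
    moreover have "u j = u x + m * int n" "u (j + 1) = u (x + 1) + m * int n"
      using periodic_shift[OF u, of x m] periodic_shift[OF u, of "x + 1" m] j by (simp_all only:)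
    ultimately show ?thesis by simp
  qed
  have "surj u" unfolding u_def using w bij_betw_inv_into bij_is_surj unfolding periodic_def by blast
  then have u_eq: "u j = j + u 0" for j using surj_int_succ_less_imp_translation inc by blast
  have w_eq: "w j = j - u 0" for j
  proof -
    have "w j = w (u (j - u 0))" using u_eq[of "j - u 0"] by simp
    also have "\<dots> = j - u 0" unfolding u_def using w by simp
    finally show ?thesis .
  qed
  then have "(\<Sum>i\<in>{1..int n}. w i) = (\<Sum>i\<in>{1..int n}. i) - int n * u 0"
    by (simp add: sum_subtractf)
  then have "u 0 = 0" using a n_pos unfolding affine_perm_def by simp
  then show "w = id" using w_eq by (intro ext) simp
qed

lemma affine_perm_descent:
  assumes a: "affine_perm n w" and "w \<noteq> id"
  obtains x where "x < n" and "inv w (int x + 1) < inv w (int x)"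
proof -
  have w: "periodic w" using affine_perm_periodic[OF a] .
  from assms obtain x where "x < n" "\<not> inv w (int x) < inv w (int x + 1)"
    using affine_perm_no_descent_eq_id by blast
  with incong_imp_neq[OF incong_conj_sref[OF w], of "int x"] show thesis
    using that by fastforce
qed

lemma ex_word_of_length_ninv:
  "affine_perm n w \<Longrightarrow> \<exists>a. is_word n a \<and> length a = ninv w \<and> W a = w"
proof (induction "ninv w" arbitrary: w)
  case 0
  have "w = id"
  proof (rule ccontr)
    assume "w \<noteq> id"
    with 0(2) obtain x where "inv w (int x + 1) < inv w (int x)" by (rule affine_perm_descent)
    then have "conj_sref w (int x) \<in> inversions w"
      using conj_sref_in_inversions_iff[OF affine_perm_periodic[OF 0(2)]] by simp
    with 0(1) finite_inversions[OF affine_perm_periodic[OF 0(2)]] show False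
      unfolding ninv_def by simp
  qed
  then have "is_word n [] \<and> length [] = ninv w \<and> W [] = w"
    using ninv_id unfolding is_word_def by simp
  then show ?case by blast
next
  case (Suc k)
  have w: "periodic w" using affine_perm_periodic[OF Suc(3)] .
  have "w \<noteq> id" using Suc(2) ninv_id by auto
  with Suc(3) obtain x where x: "x < n" "inv w (int x + 1) < inv w (int x)"
    by (rule affine_perm_descent)
  then have k: "ninv (sref n x \<circ> w) = k" using ninv_sref_comp[OF w, of x] Suc(2) by simp
  obtain a where a: "is_word n a" "length a = ninv (sref n x \<circ> w)" "W a = sref n x \<circ> w"
    using Suc(1)[OF k[symmetric] affine_perm_sref_comp[OF Suc(3)]] by blast
  have "W (x # a) = w" unfolding W_Cons a(3) by (rule ext) simp
  moreover have "is_word n (x # a)" using a(1) x(1) unfolding is_word_def by simp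
  ultimately show ?case using a(2) k Suc(2) by (intro exI[of _ "x # a"]) simp
qed

lemma clen_eq_ninv:
  assumes "affine_perm n w"
  shows "clen n w = ninv w"
  unfolding clen_def
proof (rule Least_equality)
  show "\<exists>a. is_word n a \<and> length a = ninv w \<and> W a = w"
    using ex_word_of_length_ninv[OF assms] .
next
  fix k assume "\<exists>a. is_word n a \<and> length a = k \<and> W a = w"
  then show "ninv w \<le> k" using ninv_W_le by blast
qed

lemma red_words_iff:
  "affine_perm n w \<Longrightarrow> a \<in> red_words n w \<longleftrightarrow> is_word n a \<and> W a = w \<and> length a = ninv w"
  unfolding red_words_def using clen_eq_ninv by auto

lemma is_reduced_iff: "is_reduced n a \<longleftrightarrow> is_word n a \<and> ninv (W a) = length a"
  unfolding is_reduced_def using red_words_iff[OF affine_perm_W] by auto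

section \<open>Deleted reflections of words\<close>

definition suffix_perm :: "nat list \<Rightarrow> nat \<Rightarrow> int \<Rightarrow> int" where
  "suffix_perm a i = W (drop (Suc i) a)"

definition del_refl :: "nat list \<Rightarrow> nat \<Rightarrow> int \<Rightarrow> int" where
  "del_refl a i = conj_sref (suffix_perm a i) (int (a ! i))"

text \<open>The endpoints \<open>p\<close>, \<open>q\<close> of the reflection \<open>t\<^sub>p\<^sub>,\<^sub>q\<close> removed by deleting \<open>a\<^sub>i\<close>
  (see \<open>W_del_at\<close>); the Little bump is tracked through their residues modulo \<open>n\<close>.\<close>
definition refl_fst :: "nat list \<Rightarrow> nat \<Rightarrow> int" where
  "refl_fst a i = inv (suffix_perm a i) (int (a ! i))"

definition refl_snd :: "nat list \<Rightarrow> nat \<Rightarrow> int" where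
  "refl_snd a i = inv (suffix_perm a i) (int (a ! i) + 1)"

definition reduced :: "nat list \<Rightarrow> bool" where
  "reduced a \<longleftrightarrow> ninv (W a) = length a"

lemma periodic_suffix_perm: "periodic (suffix_perm a i)"
  unfolding suffix_perm_def by (rule periodic_W)

lemma del_refl_eq_tref: "del_refl a i = tref n (refl_fst a i) (refl_snd a i)"
  unfolding del_refl_def conj_sref_def refl_fst_def refl_snd_def ..

lemma del_refl_conj: "del_refl a i = inv (suffix_perm a i) \<circ> sref n (a ! i) \<circ> suffix_perm a i"
  unfolding del_refl_def sref_eq_tref using conj_sref_eq[OF periodic_suffix_perm] by simp

lemma incong_refl: "incong (refl_fst a i) (refl_snd a i)"
  unfolding refl_fst_def refl_snd_def using incong_conj_sref[OF periodic_suffix_perm] .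

lemma del_refl_del_refl [simp]: "del_refl a i (del_refl a i j) = j"
  unfolding del_refl_eq_tref using incong_refl by simp

lemma inv_del_refl: "inv (del_refl a i) = del_refl a i"
  unfolding del_refl_eq_tref using inv_tref[OF incong_refl] .

lemma periodic_del_refl: "periodic (del_refl a i)"
  unfolding del_refl_eq_tref using periodic_tref[OF incong_refl] .

lemma W_del_at:
  assumes "i < length a"
  shows "W (del_at i a) = W a \<circ> del_refl a i"
proof -
  have "a = take i a @ (a ! i) # drop (Suc i) a" using assms by (simp add: id_take_nth_drop)
  then have "W a = W (take i a) \<circ> sref n (a ! i) \<circ> suffix_perm a i"
    unfolding suffix_perm_def by (metis W_Cons W_append o_assoc)
  then have "W a \<circ> del_refl a i = W (take i a) \<circ> suffix_perm a i"
    unfolding del_refl_conj by (auto simp: periodic_suffix_perm)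
  then show ?thesis unfolding del_at_def suffix_perm_def W_append by simp
qed

lemma W_eq_W_del_at_comp: "i < length a \<Longrightarrow> W a = W (del_at i a) \<circ> del_refl a i"
  unfolding W_del_at by (rule ext) simp

lemma del_refl_Cons_0: "del_refl (x # a) 0 = conj_sref (W a) (int x)"
  unfolding del_refl_def suffix_perm_def by simp

lemma del_refl_Cons_Suc: "del_refl (x # a) (Suc i) = del_refl a i"
  unfolding del_refl_def suffix_perm_def by simp

lemma del_refl_drop: "m \<le> i \<Longrightarrow> i < length a \<Longrightarrow> del_refl (drop m a) (i - m) = del_refl a i"
  unfolding del_refl_def suffix_perm_def by simp

lemma reduced_Cons:
  assumes "reduced (x # a)"
  shows "reduced a" and "conj_sref (W a) (int x) \<notin> inversions (W a)"
proof -
  have le: "ninv (W a) \<le> length a" using ninv_W_le[of a] by simp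
  have ninv: "ninv (W (x # a)) =
      (if inv (W a) (int x + 1) < inv (W a) (int x) then ninv (W a) - 1 else ninv (W a) + 1)"
    unfolding W_Cons by (rule ninv_sref_comp[OF periodic_W])
  with assms le have asc: "\<not> inv (W a) (int x + 1) < inv (W a) (int x)"
    unfolding reduced_def by (auto split: if_splits)
  with ninv assms show "reduced a" unfolding reduced_def by simp
  from asc show "conj_sref (W a) (int x) \<notin> inversions (W a)"
    using conj_sref_in_inversions_iff[OF periodic_W] by simp
qed

lemma reduced_drop: "reduced a \<Longrightarrow> reduced (drop m a)"
proof (induction m arbitrary: a)
  case (Suc m)
  then show ?case by (cases a) (auto dest: reduced_Cons)
qed simp

lemma inversions_reduced: "reduced c \<Longrightarrow> inversions (W c) = del_refl c ` {..<length c}"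
proof (induction c)
  case Nil
  show ?case unfolding W_Nil inversions_def by simp
next
  case (Cons x c)
  note red = reduced_Cons[OF Cons(2)]
  have "inversions (W (x # c)) = insert (conj_sref (W c) (int x)) (inversions (W c))"
    unfolding W_Cons sref_eq_tref using inversions_tref_succ_comp[OF periodic_W, of "int x" c] red(2)
    by auto
  also have "\<dots> = del_refl (x # c) ` {..<length (x # c)}"
    unfolding Cons(1)[OF red(1)] lessThan_Suc_eq_insert_0 length_Cons
    by (auto simp: del_refl_Cons_0 del_refl_Cons_Suc image_image)
  finally show ?case .
qed

lemma inj_on_del_refl:
  assumes "reduced c"
  shows "inj_on (del_refl c) {..<length c}"
proof (rule eq_card_imp_inj_on)
  show "card (del_refl c ` {..<length c}) = card {..<length c}"
    using assms unfolding inversions_reduced[OF assms, symmetric] reduced_def ninv_def by simp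
qed simp

lemma ninv_comp_inversion_less:
  assumes w: "affine_perm n w" and t: "t \<in> inversions w"
  shows "ninv (w \<circ> t) < ninv w"
proof -
  obtain c where c: "is_word n c" "length c = ninv w" "W c = w"
    using ex_word_of_length_ninv[OF w] by blast
  then have "reduced c" unfolding reduced_def by simp
  then obtain q where q: "q < length c" "t = del_refl c q"
    using t inversions_reduced c(3) by auto
  then have "w \<circ> t = W (del_at q c)" using W_del_at c(3) by simp
  moreover have "ninv (W (del_at q c)) \<le> length c - 1"
    using ninv_W_le[of "del_at q c"] q(1) unfolding del_at_def by simp
  ultimately show ?thesis using q(1) c(2) by simp
qed

lemma tref_in_inversions_comp_iff:
  assumes w: "periodic w" and pq: "incong p q"
  shows "tref n p q \<in> inversions (w \<circ> tref n p q) \<longleftrightarrow> tref n p q \<notin> inversions w"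
proof -
  have "w p \<noteq> w q" "p \<noteq> q" using periodic_eq_iff[OF w] incong_imp_neq[OF pq] by auto
  moreover have "tref n p q \<in> inversions (w \<circ> tref n p q) \<longleftrightarrow> (p < q \<longleftrightarrow> w p < w q)"
    using tref_in_inversions_iff[OF periodic_comp[OF w periodic_tref[OF pq]] pq]
      tref_left[OF pq, of 0] tref_right[OF pq, of 0] by simp
  ultimately show ?thesis using tref_in_inversions_iff[OF w pq] by linarith
qed

lemma inversion_of_ninv_comp_less:
  assumes w: "affine_perm n w" and wt: "affine_perm n (w \<circ> tref n p q)" and pq: "incong p q"
    and less: "ninv (w \<circ> tref n p q) < ninv w"
  shows "tref n p q \<in> inversions w"
proof (rule ccontr)
  assume "tref n p q \<notin> inversions w"
  then have "tref n p q \<in> inversions (w \<circ> tref n p q)"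
    using tref_in_inversions_comp_iff[OF affine_perm_periodic[OF w] pq] by simp
  then have "ninv (w \<circ> tref n p q \<circ> tref n p q) < ninv (w \<circ> tref n p q)"
    using ninv_comp_inversion_less[OF wt] by blast
  with less show False unfolding comp_tref_tref[OF pq] by simp
qed

lemma refl_fst_less_iff:
  "refl_fst a i < refl_snd a i \<longleftrightarrow> del_refl a i \<notin> inversions (suffix_perm a i)"
  using tref_in_inversions_iff[OF periodic_suffix_perm incong_refl, of a i]
  unfolding del_refl_eq_tref refl_fst_def refl_snd_def by (simp add: periodic_suffix_perm)

lemma refl_fst_less_if_reduced:
  assumes "i < length a" and "reduced (drop i a)"
  shows "refl_fst a i < refl_snd a i"
proof -
  have "drop i a = a ! i # drop (Suc i) a" using assms(1) by (simp add: Cons_nth_drop_Suc)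
  then have "del_refl a i \<notin> inversions (suffix_perm a i)"
    using reduced_Cons(2) assms(2) unfolding del_refl_def suffix_perm_def by metis
  then show ?thesis using refl_fst_less_iff by simp
qed

lemma length_del_at: "i < length a \<Longrightarrow> length (del_at i a) = length a - 1"
  unfolding del_at_def by simp

lemma is_word_del_at: "is_word n a \<Longrightarrow> is_word n (del_at i a)"
  unfolding is_word_def del_at_def by (auto dest: in_set_takeD in_set_dropD)

lemma del_refl_del_at_ge:
  assumes "i < length b" and "i \<le> q" and "q < length (del_at i b)"
  shows "del_refl (del_at i b) q = del_refl b (Suc q)"
proof -
  have "del_at i b ! q = b ! Suc q" "drop (Suc q) (del_at i b) = drop (Suc (Suc q)) b"
    unfolding del_at_def using assms by (simp_all add: nth_append)
  then show ?thesis unfolding del_refl_def suffix_perm_def by simp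
qed

lemma suffix_perm_del_at_less:
  assumes i: "i < length b" and "q < i"
  shows "suffix_perm b q = suffix_perm (del_at i b) q \<circ> del_refl b i"
proof -
  define M where "M = take (i - Suc q) (drop (Suc q) b)"
  have "drop (Suc q) b = M @ drop (i - Suc q) (drop (Suc q) b)"
    unfolding M_def by (rule append_take_drop_id[symmetric])
  also have "drop (i - Suc q) (drop (Suc q) b) = b ! i # drop (Suc i) b"
    using \<open>q < i\<close> i by (simp add: Cons_nth_drop_Suc)
  finally have b: "suffix_perm b q = W M \<circ> sref n (b ! i) \<circ> suffix_perm b i"
    unfolding suffix_perm_def by (simp add: W_append W_Cons o_assoc)
  have del: "suffix_perm (del_at i b) q = W M \<circ> suffix_perm b i"
    unfolding suffix_perm_def del_at_def M_def using \<open>q < i\<close> i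
    by (simp add: W_append drop_take)
  show ?thesis
    unfolding b del del_refl_conj by (auto simp: periodic_suffix_perm)
qed

lemma del_refl_del_at_less:
  assumes "i < length b" and "q < i"
  shows "del_refl b q = del_refl b i \<circ> del_refl (del_at i b) q \<circ> del_refl b i"
proof -
  have nth: "b ! q = del_at i b ! q" unfolding del_at_def using assms by (simp add: nth_append)
  have "bij (suffix_perm (del_at i b) q)" "bij (del_refl b i)"
    using periodic_suffix_perm periodic_del_refl unfolding periodic_def by auto
  then have inv: "inv (suffix_perm b q) = del_refl b i \<circ> inv (suffix_perm (del_at i b) q)"
    unfolding suffix_perm_del_at_less[OF assms] by (simp add: o_inv_distrib inv_del_refl)
  have "del_refl b q = inv (suffix_perm b q) \<circ> sref n (b ! q) \<circ> suffix_perm b q"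
    by (rule del_refl_conj)
  also have "\<dots> = del_refl b i \<circ> (inv (suffix_perm (del_at i b) q) \<circ> sref n (del_at i b ! q)
      \<circ> suffix_perm (del_at i b) q) \<circ> del_refl b i"
    unfolding inv unfolding nth suffix_perm_del_at_less[OF assms] by (simp add: o_assoc)
  finally show ?thesis by (simp only: del_refl_conj)
qed

lemma conj_del_refl_eq_self_iff:
  "del_refl b i \<circ> f \<circ> del_refl b i = del_refl b i \<longleftrightarrow> f = del_refl b i"
proof
  assume conj: "del_refl b i \<circ> f \<circ> del_refl b i = del_refl b i"
  show "f = del_refl b i"
  proof
    fix y
    have "del_refl b i (f y) = y"
      using fun_cong[OF conj, of "del_refl b i y"] by simp
    then show "f y = del_refl b i y" by (metis del_refl_del_refl)
  qed
qed (simp add: fun_eq_iff)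

end

locale marked_words = affine_symmetric +
  fixes v :: "int \<Rightarrow> int"
  assumes affine_v: "affine_perm n v"
begin

lemma periodic_v: "periodic v"
  using affine_perm_periodic[OF affine_v] .

lemma marked_iff:
  "marked n v (a, i) \<longleftrightarrow> is_word n a \<and> i < length a \<and> W (del_at i a) = v \<and> length a = ninv v + 1"
proof -
  have "marked n v (a, i) \<longleftrightarrow>
      is_word n a \<and> i < length a \<and> is_word n (del_at i a) \<and> W (del_at i a) = v
      \<and> length (del_at i a) = ninv v"
    unfolding marked_def red_words_iff[OF affine_v] by simp
  also have "\<dots> \<longleftrightarrow> is_word n a \<and> i < length a \<and> W (del_at i a) = v \<and> length a = ninv v + 1"
    using is_word_del_at[of a i] length_del_at[of i a] by auto
  finally show ?thesis .
qed

lemma reduced_del_at_if_marked: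
  assumes "marked n v (a, i)"
  shows "reduced (del_at i a)"
proof -
  have a: "i < length a" "W (del_at i a) = v" "length a = ninv v + 1"
    using assms marked_iff by auto
  then show ?thesis unfolding reduced_def using length_del_at[OF a(1)] by simp
qed

lemma del_at_red_words_iff:
  assumes m: "marked n v (b, i)" and j: "j < length b"
  shows "del_at j b \<in> red_words n v \<longleftrightarrow> del_refl b j = del_refl b i"
proof -
  have b: "is_word n b" "i < length b" "W (del_at i b) = v" "length b = ninv v + 1"
    using m marked_iff by auto
  have "v = W b \<circ> del_refl b i" using W_del_at[OF b(2)] b(3) by simp
  then have "W (del_at j b) = v \<longleftrightarrow> W b \<circ> del_refl b j = W b \<circ> del_refl b i"
    using W_del_at[OF j] by simp
  also have "\<dots> \<longleftrightarrow> del_refl b j = del_refl b i"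
    using periodic_cancel_left[OF periodic_W, of b "del_refl b j" "del_refl b i"] by auto
  moreover have "is_word n (del_at j b)" "length (del_at j b) = ninv v"
    using is_word_del_at[OF b(1)] length_del_at[OF j] b(4) by simp_all
  ultimately show ?thesis
    unfolding red_words_iff[OF affine_v] by simp
qed

lemma twin_in_del_at:
  assumes m: "marked n v (b, i)" and j: "j < length b" "j \<noteq> i" "del_refl b j = del_refl b i"
  defines "q \<equiv> if i < j then j - 1 else j"
  shows "q < length (del_at i b)" and "del_refl (del_at i b) q = del_refl b i"
proof -
  have i: "i < length b" using m marked_iff by auto
  show "q < length (del_at i b)" unfolding q_def using i j length_del_at[OF i] by auto
  show "del_refl (del_at i b) q = del_refl b i"
  proof (cases "i < j")
    case True
    then show ?thesis
      unfolding q_def using del_refl_del_at_ge[OF i, of "j - 1"] j length_del_at[OF i] by simp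
  next
    case False
    then have "j < i" using j(2) by simp
    from del_refl_del_at_less[OF i this] j(3)
    have "del_refl b i \<circ> del_refl (del_at i b) j \<circ> del_refl b i = del_refl b i" by simp
    with False show ?thesis unfolding q_def conj_del_refl_eq_self_iff by simp
  qed
qed

lemma twin_unique:
  assumes m: "marked n v (b, i)"
    and j: "j < length b" "j \<noteq> i" "del_refl b j = del_refl b i"
    and k: "k < length b" "k \<noteq> i" "del_refl b k = del_refl b i"
  shows "j = k"
proof -
  have "(if i < j then j - 1 else j) = (if i < k then k - 1 else k)"
    using inj_on_del_refl[OF reduced_del_at_if_marked[OF m]] twin_in_del_at[OF m j] twin_in_del_at[OF m k]
    unfolding inj_on_def by auto
  then show ?thesis using j(2) k(2) by (auto split: if_splits)
qed

text \<open>If \<open>b\<close> is not reduced then \<open>W b = v t\<close> is shorter than \<open>v\<close>, so \<open>t\<close> is an inversion of \<open>v\<close>,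
  i.e. it is the reflection of some letter of the reduced word \<open>del_at i b\<close> of \<open>v\<close>.\<close>
lemma twin_exists:
  assumes m: "marked n v (b, i)" and nr: "\<not> is_reduced n b"
  obtains j where "j < length b" "j \<noteq> i" "del_refl b j = del_refl b i"
proof -
  have b: "is_word n b" "i < length b" "W (del_at i b) = v" "length b = ninv v + 1"
    using m marked_iff by auto
  define c where "c = del_at i b"
  have Wb: "W b = v \<circ> tref n (refl_fst b i) (refl_snd b i)"
    using W_eq_W_del_at_comp[OF b(2)] b(3) del_refl_eq_tref by simp
  obtain k where k: "length b - ninv (W b) = 2 * k" using ninv_W_le[of b] by blast
  have "ninv (W b) \<noteq> length b" using nr b(1) is_reduced_iff by simp
  with k ninv_W_le[of b] have "ninv (W b) < ninv v" using b(4) by presburger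
  moreover have "affine_perm n (v \<circ> tref n (refl_fst b i) (refl_snd b i))"
    using affine_perm_W[of b] Wb by simp
  ultimately have "del_refl b i \<in> inversions v"
    using inversion_of_ninv_comp_less[OF affine_v _ incong_refl] Wb
    unfolding del_refl_eq_tref by simp
  moreover have "inversions v = del_refl c ` {..<length c}"
    using inversions_reduced[OF reduced_del_at_if_marked[OF m]] b(3) unfolding c_def by simp
  ultimately obtain q where q: "q < length c" "del_refl c q = del_refl b i" by auto
  show thesis
  proof (cases "i \<le> q")
    case True
    then show thesis
      using that[of "Suc q"] del_refl_del_at_ge[OF b(2) True] q length_del_at[OF b(2)]
      unfolding c_def by simp
  next
    case False
    then have "q < i" by simp
    have "del_refl b q = del_refl b i"
      using del_refl_del_at_less[OF b(2) \<open>q < i\<close>] q(2) unfolding c_def by (simp add: fun_eq_iff)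
    then show thesis using that[of q] \<open>q < i\<close> b(2) by simp
  qed
qed

lemma the_twin:
  assumes m: "marked n v (b, i)" and nr: "\<not> is_reduced n b"
  defines "j \<equiv> THE j. j < length b \<and> j \<noteq> i \<and> del_at j b \<in> red_words n v"
  shows "j < length b" and "j \<noteq> i" and "del_at j b \<in> red_words n v"
    and "del_refl b j = del_refl b i"
proof -
  obtain k where k: "k < length b" "k \<noteq> i" "del_refl b k = del_refl b i"
    using twin_exists[OF m nr] .
  have "\<exists>!j. j < length b \<and> j \<noteq> i \<and> del_at j b \<in> red_words n v"
  proof
    show "k < length b \<and> k \<noteq> i \<and> del_at k b \<in> red_words n v"
      using k del_at_red_words_iff[OF m] by simp
    show "j = k" if "j < length b \<and> j \<noteq> i \<and> del_at j b \<in> red_words n v" for j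
      using that twin_unique[OF m _ _ _ k] del_at_red_words_iff[OF m] by blast
  qed
  then have "j < length b \<and> j \<noteq> i \<and> del_at j b \<in> red_words n v"
    unfolding j_def by (rule theI')
  then show "j < length b" "j \<noteq> i" "del_at j b \<in> red_words n v"
    and "del_refl b j = del_refl b i" using del_at_red_words_iff[OF m] by auto
qed

section \<open>Marked words and the Little bump\<close>

lemma twin_orientation_after:
  assumes m: "marked n v (b, i)" and j: "j < length b" "del_refl b j = del_refl b i" and "i < j"
  shows "refl_fst b j < refl_snd b j" and "\<not> refl_fst b i < refl_snd b i"
proof -
  have i: "i < length b" using m marked_iff by auto
  have c: "reduced (del_at i b)" using reduced_del_at_if_marked[OF m] .
  have "drop j b = drop (j - 1) (del_at i b)" "drop (Suc i) b = drop i (del_at i b)"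
    unfolding del_at_def using \<open>i < j\<close> i by simp_all
  then have red_j: "reduced (drop j b)" and red_i: "reduced (drop (Suc i) b)"
    using reduced_drop[OF c] by simp_all
  from red_j show "refl_fst b j < refl_snd b j" using refl_fst_less_if_reduced[OF j(1)] by simp
  have "del_refl b j = del_refl (drop (Suc i) b) (j - Suc i)"
    using del_refl_drop[of "Suc i" j b] \<open>i < j\<close> j(1) by simp
  then have "del_refl b i \<in> inversions (suffix_perm b i)"
    using inversions_reduced[OF red_i] \<open>i < j\<close> j unfolding suffix_perm_def by auto
  then show "\<not> refl_fst b i < refl_snd b i" using refl_fst_less_iff by simp
qed

lemma twin_orientation_before:
  assumes m: "marked n v (b, i)" and j: "j < length b" "del_refl b j = del_refl b i" and "j < i"
  shows "refl_fst b i < refl_snd b i" and "\<not> refl_fst b j < refl_snd b j"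
proof -
  define c where "c = del_at i b"
  have i: "i < length b" using m marked_iff by auto
  have c: "reduced c" unfolding c_def using reduced_del_at_if_marked[OF m] .
  have jc: "j < length c" "del_refl c j = del_refl b i"
    using twin_in_del_at[OF m j(1) _ j(2)] \<open>j < i\<close> unfolding c_def by auto
  have "del_refl b i \<notin> inversions (suffix_perm b i)"
  proof
    assume "del_refl b i \<in> inversions (suffix_perm b i)"
    moreover have "suffix_perm b i = W (drop i c)"
      unfolding suffix_perm_def c_def del_at_def using i by simp
    ultimately obtain r where r: "r < length (drop i c)" "del_refl b i = del_refl (drop i c) r"
      using inversions_reduced[OF reduced_drop[OF c]] by auto
    then have "del_refl c j = del_refl c (i + r)"
      using del_refl_drop[of i "i + r" c] jc(2) by simp
    with jc(1) r(1) have "j = i + r" using inj_on_del_refl[OF c] unfolding inj_on_def by auto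
    with \<open>j < i\<close> show False by simp
  qed
  then show "refl_fst b i < refl_snd b i" using refl_fst_less_iff by simp
  have "refl_fst c j < refl_snd c j"
    using refl_fst_less_if_reduced[OF jc(1) reduced_drop[OF c]] .
  then have "del_refl b i \<notin> inversions (suffix_perm c j)"
    using refl_fst_less_iff jc(2) by simp
  then have "del_refl b i \<in> inversions (suffix_perm c j \<circ> del_refl b i)"
    using tref_in_inversions_comp_iff[OF periodic_suffix_perm incong_refl]
    unfolding del_refl_eq_tref by simp
  then have "del_refl b j \<in> inversions (suffix_perm b j)"
    using suffix_perm_del_at_less[OF i \<open>j < i\<close>] j(2) unfolding c_def by simp
  then show "\<not> refl_fst b j < refl_snd b j" using refl_fst_less_iff by simp
qed

text \<open>Two letters carrying the same reflection \<open>t\<^sub>p\<^sub>,\<^sub>q\<close> see it with opposite orientations,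
  so the roles of \<open>p\<close> and \<open>q\<close> are exchanged modulo \<open>n\<close>.\<close>
lemma refl_fst_twin:
  assumes m: "marked n v (b, i)" and j: "j < length b" "j \<noteq> i" "del_refl b j = del_refl b i"
  shows "refl_fst b j mod int n = refl_snd b i mod int n"
proof -
  have orient: "(refl_fst b i < refl_snd b i) \<noteq> (refl_fst b j < refl_snd b j)"
    using twin_orientation_after[OF m j(1,3)] twin_orientation_before[OF m j(1,3)] j(2)
    by (cases "i < j") auto
  from incong_refl incong_refl j(3)[unfolded del_refl_eq_tref, symmetric]
  show ?thesis
  proof (cases rule: tref_eq_tref_imp)
    case (1 m)
    with orient show ?thesis by simp
  qed simp
qed

definition decr :: "nat list \<Rightarrow> nat \<Rightarrow> nat list" where
  "decr a i = a[i := (a ! i + n - 1) mod n]"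

lemma little_next_eq:
  "little_next n v (a, i) = (if is_reduced n (decr a i) then (decr a i, i)
     else (decr a i, THE j. j < length (decr a i) \<and> j \<noteq> i \<and> del_at j (decr a i) \<in> red_words n v))"
  unfolding little_next_def decr_def Let_def by simp

lemma length_decr [simp]: "length (decr a i) = length a"
  unfolding decr_def by simp

lemma del_at_decr: "i < length a \<Longrightarrow> del_at i (decr a i) = del_at i a"
  unfolding decr_def del_at_def by simp

lemma suffix_perm_decr: "suffix_perm (decr a i) i = suffix_perm a i"
  unfolding suffix_perm_def decr_def by simp

lemma is_word_decr: "is_word n a \<Longrightarrow> is_word n (decr a i)"
  unfolding decr_def is_word_def using two_le_n
  by (auto dest: set_update_subset_insert[THEN subsetD])

lemma marked_decr: "marked n v (a, i) \<Longrightarrow> marked n v (decr a i, i)"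
  unfolding marked_iff using del_at_decr is_word_decr by auto

lemma little_next_marked:
  assumes "marked n v x"
  shows "marked n v (little_next n v x)"
proof -
  obtain a i where x: "x = (a, i)" by fastforce
  have md: "marked n v (decr a i, i)" using marked_decr assms x by simp
  show ?thesis
  proof (cases "is_reduced n (decr a i)")
    case False
    note twin = the_twin[OF md False]
    have "is_word n (decr a i)" using md marked_iff by auto
    with twin(1,3) False show ?thesis unfolding x little_next_eq marked_def by simp
  qed (use md x little_next_eq in simp)
qed

lemma refl_snd_decr:
  assumes "i < length a" and "a ! i < n"
  shows "refl_snd (decr a i) i mod int n = refl_fst a i mod int n"
proof -
  have "int ((a ! i + n - 1) mod n) + 1 = (int (a ! i) + int n - 1) mod int n + 1"
    using two_le_n by (simp add: of_nat_mod)
  then have "(int (decr a i ! i) + 1) mod int n = int (a ! i) mod int n"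
    using assms(1) unfolding decr_def by (simp add: mod_add_left_eq)
  then show ?thesis
    unfolding refl_fst_def refl_snd_def suffix_perm_decr
    using periodic_mod_eq_iff[OF periodic_inv[OF periodic_suffix_perm]] by simp
qed

lemma little_next_residue:
  assumes m: "marked n v (a, i)" and nx: "little_next n v (a, i) = (b, j)"
  shows "is_reduced n b \<Longrightarrow> refl_snd b j mod int n = refl_fst a i mod int n"
    and "\<not> is_reduced n b \<Longrightarrow> refl_fst b j mod int n = refl_fst a i mod int n"
proof -
  have "is_word n a" "i < length a" using m marked_iff by auto
  then have b: "b = decr a i" and snd: "refl_snd b i mod int n = refl_fst a i mod int n"
    using nx refl_snd_decr[of i a] unfolding little_next_eq is_word_def
    by (auto split: if_splits)
  show "is_reduced n b \<Longrightarrow> refl_snd b j mod int n = refl_fst a i mod int n"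
    using nx snd unfolding little_next_eq b by simp
  assume nr: "\<not> is_reduced n b"
  have mb: "marked n v (b, i)" using marked_decr[OF m] b by simp
  have "j = (THE j. j < length b \<and> j \<noteq> i \<and> del_at j b \<in> red_words n v)"
    using nx nr unfolding little_next_eq b by simp
  with the_twin[OF mb nr] have "refl_fst b j mod int n = refl_snd b i mod int n"
    using refl_fst_twin[OF mb] by simp
  with snd show "refl_fst b j mod int n = refl_fst a i mod int n" by simp
qed

lemma finite_marked: "finite {x. marked n v x}"
proof (rule finite_subset)
  show "{x. marked n v x} \<subseteq> {a. set a \<subseteq> {..<n} \<and> length a = ninv v + 1} \<times> {..<ninv v + 1}"
  proof clarify
    fix a i assume "marked n v (a, i)"
    then show "a \<in> {a. set a \<subseteq> {..<n} \<and> length a = ninv v + 1} \<and> i \<in> {..<ninv v + 1}"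
      unfolding marked_iff is_word_def by auto
  qed
  show "finite ({a. set a \<subseteq> {..<n} \<and> length a = ninv v + 1} \<times> {..<ninv v + 1})"
    using finite_lists_length_eq[of "{..<n}"] by simp
qed

lemma decr_letter_eq: "x < n \<Longrightarrow> (x + n - 1) mod n = (if x = 0 then n - 1 else x - 1)"
  using two_le_n by (cases x) (simp_all add: mod_if)

lemma decr_inj:
  assumes "i < length a" and "length a' = length a" and "a ! i < n" and "a' ! i < n"
    and eq: "decr a i = decr a' i"
  shows "a = a'"
proof -
  have "(a ! i + n - 1) mod n = (a' ! i + n - 1) mod n"
    using arg_cong[OF eq, of "\<lambda>l. l ! i"] assms(1,2) unfolding decr_def by simp
  then have "a ! i = a' ! i" using assms(3,4) decr_letter_eq two_le_n by (auto split: if_splits)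
  then show ?thesis using eq unfolding decr_def by (metis list_update_id list_update_overwrite)
qed

lemma fst_little_next: "fst (little_next n v (a, i)) = decr a i"
  unfolding little_next_eq by simp

lemma little_next_eq_imp_index_eq:
  assumes x: "marked n v (a, i)" and y: "marked n v (a', i')"
    and eq: "little_next n v (a, i) = little_next n v (a', i')"
  shows "i = i'"
proof -
  obtain b j where bj: "little_next n v (a, i) = (b, j)" by fastforce
  with eq have bj': "little_next n v (a', i') = (b, j)" by simp
  have b: "b = decr a i" "b = decr a' i'"
    using fst_little_next[of a i] fst_little_next[of a' i'] bj bj' by simp_all
  show ?thesis
  proof (cases "is_reduced n b")
    case True
    have "little_next n v (a, i) = (b, i)" "little_next n v (a', i') = (b, i')"
      using True b unfolding little_next_eq by simp_all
    then show ?thesis using bj bj' by simp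
  next
    case False
    have m: "marked n v (b, i)" "marked n v (b, i')"
      using marked_decr[OF x] marked_decr[OF y] b by simp_all
    have "j = (THE j. j < length b \<and> j \<noteq> i \<and> del_at j b \<in> red_words n v)"
      "j = (THE j. j < length b \<and> j \<noteq> i' \<and> del_at j b \<in> red_words n v)"
      using bj bj' b False unfolding little_next_eq by simp_all
    then have "j < length b" "j \<noteq> i" "j \<noteq> i'" "del_refl b j = del_refl b i"
      "del_refl b j = del_refl b i'" "marked n v (b, j)"
      using the_twin[OF m(1) False] the_twin[OF m(2) False] m(1) unfolding marked_def by auto
    then show ?thesis using twin_unique[of b j i i'] m marked_iff by auto
  qed
qed

lemma inj_on_little_next: "inj_on (little_next n v) {x. marked n v x}"
proof (rule inj_onI)
  fix x y assume "x \<in> {x. marked n v x}" "y \<in> {x. marked n v x}"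
    and eq: "little_next n v x = little_next n v y"
  moreover obtain a i a' i' where "x = (a, i)" "y = (a', i')" by fastforce
  ultimately have x: "x = (a, i)" "marked n v (a, i)" and y: "y = (a', i')" "marked n v (a', i')"
    by simp_all
  have "i = i'" using little_next_eq_imp_index_eq x y eq by simp
  moreover have "decr a i = decr a' i'"
    using fst_little_next[of a i] fst_little_next[of a' i'] eq x(1) y(1) by simp
  then have "a = a'"
    using decr_inj[of i a a'] x(2) y(2) \<open>i = i'\<close> unfolding marked_iff is_word_def by simp
  ultimately show "x = y" using x y by simp
qed

lemma bij_betw_little_next: "bij_betw (little_next n v) {x. marked n v x} {x. marked n v x}"
proof -
  have "little_next n v ` {x. marked n v x} \<subseteq> {x. marked n v x}"
    using little_next_marked by auto
  then show ?thesis
    using endo_inj_surj[OF finite_marked _ inj_on_little_next] inj_on_little_next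
    by (simp add: bij_betw_def)
qed

lemma W_eq_v_comp_refl:
  assumes m: "marked n v (a, i)"
  shows "W a = v \<circ> tref n (refl_fst a i) (refl_snd a i)"
  using W_eq_W_del_at_comp[of i a] m unfolding marked_iff del_refl_eq_tref by auto

lemma refl_fst_less_if_marked_reduced:
  assumes "marked n v (a, i)" and "is_reduced n a"
  shows "refl_fst a i < refl_snd a i"
proof -
  have "i < length a" "reduced a" using assms marked_iff is_reduced_iff reduced_def by auto
  then show ?thesis using refl_fst_less_if_reduced reduced_drop by blast
qed

lemma W_eq_v_comp_tref_iff:
  assumes m: "marked n v (a, i)" and red: "is_reduced n a" and "c < d" and cd: "incong c d"
  shows "W a = v \<circ> tref n c d \<longleftrightarrow> (\<exists>k. c = refl_fst a i + k * int n \<and> d = refl_snd a i + k * int n)"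
proof
  note less = refl_fst_less_if_marked_reduced[OF m red]
  assume "W a = v \<circ> tref n c d"
  then have "tref n (refl_fst a i) (refl_snd a i) = tref n c d"
    using W_eq_v_comp_refl[OF m] periodic_cancel_left[OF periodic_v] by metis
  from incong_refl cd this show "\<exists>k. c = refl_fst a i + k * int n \<and> d = refl_snd a i + k * int n"
  proof (cases rule: tref_eq_tref_imp)
    case (2 k)
    with less \<open>c < d\<close> show ?thesis by simp
  qed blast
next
  assume "\<exists>k. c = refl_fst a i + k * int n \<and> d = refl_snd a i + k * int n"
  then show "W a = v \<circ> tref n c d" using W_eq_v_comp_refl[OF m] tref_shift by auto
qed

lemma covers_W:
  assumes m: "marked n v (a, i)" and red: "is_reduced n a"
  shows "covers n v (W a)"
proof -
  have "clen n (W a) = clen n v + 1"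
    using red m clen_eq_ninv[OF affine_v] clen_eq_ninv[OF affine_perm_W]
    unfolding is_reduced_iff marked_iff by simp
  then show ?thesis
    unfolding covers_def using W_eq_v_comp_refl[OF m] incong_refl[unfolded incong_def] by blast
qed

lemma mem_marked_red_words_iff:
  "(a, i) \<in> marked_red_words n v S \<longleftrightarrow> marked n v (a, i) \<and> is_reduced n a \<and> W a \<in> S"
  unfolding marked_red_words_def marked_def is_reduced_def red_words_def by auto

lemma W_mem_Psi_plus_iff:
  assumes m: "marked n v (a, i)" and red: "is_reduced n a"
  shows "W a \<in> Psi_plus n r v \<longleftrightarrow> refl_fst a i mod int n = r mod int n"
proof
  assume "W a \<in> Psi_plus n r v"
  then obtain s where "r < s" "incong r s" "W a = v \<circ> tref n r s"
    unfolding Psi_plus_def incong_def by auto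
  then show "refl_fst a i mod int n = r mod int n"
    using W_eq_v_comp_tref_iff[OF m red] by auto
next
  assume "refl_fst a i mod int n = r mod int n"
  then obtain k where k: "refl_fst a i = r + k * int n" by (metis mod_eq_imp_shift)
  define s where "s = refl_snd a i - k * int n"
  have "r < s" "incong r s"
    using k refl_fst_less_if_marked_reduced[OF m red] incong_refl[of a i] incong_shift[of r k s]
    unfolding s_def by auto
  moreover have "r = refl_fst a i + (- k) * int n \<and> s = refl_snd a i + (- k) * int n"
    using k unfolding s_def by simp
  then have "W a = v \<circ> tref n r s"
    using W_eq_v_comp_tref_iff[OF m red \<open>r < s\<close> \<open>incong r s\<close>] by blast
  ultimately show "W a \<in> Psi_plus n r v"
    unfolding Psi_plus_def incong_def using covers_W[OF m red] by auto
qed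

lemma W_mem_Psi_minus_iff:
  assumes m: "marked n v (a, i)" and red: "is_reduced n a"
  shows "W a \<in> Psi_minus n r v \<longleftrightarrow> refl_snd a i mod int n = r mod int n"
proof
  assume "W a \<in> Psi_minus n r v"
  then obtain s where "s < r" "incong s r" "W a = v \<circ> tref n s r"
    unfolding Psi_minus_def incong_def by auto
  then show "refl_snd a i mod int n = r mod int n"
    using W_eq_v_comp_tref_iff[OF m red] by auto
next
  assume "refl_snd a i mod int n = r mod int n"
  then obtain k where k: "refl_snd a i = r + k * int n" by (metis mod_eq_imp_shift)
  define s where "s = refl_fst a i - k * int n"
  have "s < r" "incong s r"
    using k refl_fst_less_if_marked_reduced[OF m red] incong_refl[of a i] incong_shift[of s k r]
    unfolding s_def by auto
  moreover have "s = refl_fst a i + (- k) * int n \<and> r = refl_snd a i + (- k) * int n"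
    using k unfolding s_def by simp
  then have "W a = v \<circ> tref n s r"
    using W_eq_v_comp_tref_iff[OF m red \<open>s < r\<close> \<open>incong s r\<close>] by blast
  ultimately show "W a \<in> Psi_minus n r v"
    unfolding Psi_minus_def incong_def using covers_W[OF m red] by auto
qed

definition reduced_marked :: "(nat list \<times> nat) set" where
  "reduced_marked = {x \<in> {x. marked n v x}. is_reduced n (fst x)}"

lemma phi_eq_first_return: "phi n v = first_return (little_next n v) (\<lambda>x. is_reduced n (fst x))"
  unfolding phi_def first_return_def ..

lemma bij_betw_phi: "bij_betw (phi n v) reduced_marked reduced_marked"
  unfolding phi_eq_first_return reduced_marked_def
  by (rule bij_betw_first_return[OF finite_marked bij_betw_little_next])

lemma refl_snd_phi:
  assumes "x \<in> reduced_marked"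
  shows "refl_snd (fst (phi n v x)) (snd (phi n v x)) mod int n = refl_fst (fst x) (snd x) mod int n"
  unfolding phi_eq_first_return
proof (rule first_return_transport[OF finite_marked bij_betw_little_next])
  show "x \<in> {x. marked n v x}" "is_reduced n (fst x)" using assms unfolding reduced_marked_def by auto
next
  fix y assume "y \<in> {x. marked n v x}"
  then show "\<not> is_reduced n (fst (little_next n v y)) \<Longrightarrow>
      refl_fst (fst (little_next n v y)) (snd (little_next n v y)) mod int n = refl_fst (fst y) (snd y) mod int n"
    and "is_reduced n (fst (little_next n v y)) \<Longrightarrow>
      refl_snd (fst (little_next n v y)) (snd (little_next n v y)) mod int n = refl_fst (fst y) (snd y) mod int n"
    using little_next_residue[of "fst y" "snd y"] by auto
qed

lemma marked_red_words_Psi_plus: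
  "marked_red_words n v (Psi_plus n r v) = {x \<in> reduced_marked. refl_fst (fst x) (snd x) mod int n = r mod int n}"
proof (rule set_eqI)
  fix x :: "nat list \<times> nat"
  obtain a i where x: "x = (a, i)" by fastforce
  show "x \<in> marked_red_words n v (Psi_plus n r v) \<longleftrightarrow>
      x \<in> {x \<in> reduced_marked. refl_fst (fst x) (snd x) mod int n = r mod int n}"
    unfolding x mem_marked_red_words_iff reduced_marked_def using W_mem_Psi_plus_iff[of a i r] by auto
qed

lemma marked_red_words_Psi_minus:
  "marked_red_words n v (Psi_minus n r v) = {x \<in> reduced_marked. refl_snd (fst x) (snd x) mod int n = r mod int n}"
proof (rule set_eqI)
  fix x :: "nat list \<times> nat"
  obtain a i where x: "x = (a, i)" by fastforce
  show "x \<in> marked_red_words n v (Psi_minus n r v) \<longleftrightarrow>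
      x \<in> {x \<in> reduced_marked. refl_snd (fst x) (snd x) mod int n = r mod int n}"
    unfolding x mem_marked_red_words_iff reduced_marked_def using W_mem_Psi_minus_iff[of a i r] by auto
qed

end

theorem theorem11:
  fixes n :: nat and v :: "int \<Rightarrow> int" and r :: int
  assumes "n \<ge> 2" and "affine_perm n v"
  shows "bij_betw (phi n v) (marked_red_words n v (Psi_plus n r v))
                            (marked_red_words n v (Psi_minus n r v))"
proof -
  interpret marked_words n v using assms by unfold_locales
  show ?thesis
    unfolding marked_red_words_Psi_plus marked_red_words_Psi_minus
  proof (rule bij_betw_restrict_preimage[OF bij_betw_phi])
    fix x assume "x \<in> reduced_marked"
    then show "phi n v x \<in> {x \<in> reduced_marked. refl_snd (fst x) (snd x) mod int n = r mod int n}
        \<longleftrightarrow> x \<in> {x \<in> reduced_marked. refl_fst (fst x) (snd x) mod int n = r mod int n}"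
      using refl_snd_phi bij_betw_apply[OF bij_betw_phi] by auto
  qed auto
qed

end
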